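(* Let $L$ be a queue implementation with fixed dequeue linearization points, and let $\Gamma=C\cup R\cup Lin(deq)$. Then $L$ is a $\Gamma$-refinement of $AbsQ_0$ (i.e. $Tr(L)|\Gamma\subseteq Tr(AbsQ_0)|\Gamma$) if and only if there exists a $\Gamma$-forward simulation from $L$ to $AbsQ$.
   Context: Fix a set $\mathit{Vals}=\mathbb{N}\cup\{\mathtt{EMPTY}\}$, $\mathit{Ops}=\mathbb{N}$, methods $\{enq,deq\}$. Call actions $inv(m,d,k)$ and return actions $ret(m,d,k)$ form sets $C$, $R$; $Lin(deq)=\{lin(deq,d,k)\}$. An LTS $(Q,\Sigma,s_0,\delta)$ has traces = label sequences of finite executions from $s_0$; $Tr(A)$ is its trace set and $\tau|\Gamma$ the projection of $\tau$ onto $\Gamma$ (extended to sets). A library is an LTS with $C\cup R\subseteq\Sigma$ all of whose traces are well formed (every return is preceded by a call with the same operation identifier; each identifier occurs in at most one call and one return) and which is closed under: inserting call actions wherever the result is well formed, moving call actions earlier, and moving return actions later. A queue implementation is a library with methods $\{enq,deq\}$ and values $\mathbb{N}\cup\{\mathtt{EMPTY}\}$ in which no value is enqueued twice in any trace. It has fixed dequeue linearization points if $C\cup R\cup Lin(deq)\subseteq\Sigma$ and in every trace every $ret(deq,d,k)$ is preceded by $lin(deq,d,k)$. For libraries $L_1=(Q_1,\Sigma_1,s^1_0,\delta_1)$, $L_2=(Q_2,\Sigma_2,s^2_0,\delta_2)$ and $C\cup R\subseteq\Gamma\subseteq\Sigma_1\cap\Sigma_2$, a $\Gamma$-forward simulation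 is a relation $fs\subseteq Q_1\times Q_2$ with $fs[s^1_0]=\{s^2_0\}$ such that: if $(s,\gamma,s')\in\delta_1$ with $\gamma\in\Gamma$ and $u\in fs[s]$, there is $u'\in fs[s']$ and a label sequence $\sigma$ with $u\xrightarrow{\sigma}u'$ in $L_2$ where exactly one position of $\sigma$ is $\gamma$ and all others are in $\Sigma_2\setminus\Gamma$; if $(s,e,s')\in\delta_1$ with $e\in\Sigma_1\setminus\Gamma$ and $u\in fs[s]$, there is $u'\in fs[s']$ with $u\xrightarrow{\sigma}u'$, $\sigma\in(\Sigma_2\setminus\Gamma)^*$. $AbsQ_0$: states $(\sigma,in,rv,cp)$, $\sigma\in\mathit{Vals}^*$, partial functions $in,rv$ to values, $cp$ to $\{A_1,A,A_2,R_1,R_2,R_3\}$, all empty initially. Transitions: $inv(enq,d,k)$ ($k\notin dom(cp)$, $d\ne\mathtt{EMPTY}$): $in(k)=d,cp(k)=A_1$; $lin(enq,d,k)$ ($cp(k)=A_1$, $in(k)=d$): $\sigma:=d\cdot\sigma$, $cp(k)=A$; $ret(enq,k)$ ($cp(k)=A$): $cp(k)=A_2$; $inv(deq,k)$ ($k\notin dom(cp)$): $cp(k)=R_1$; $lin(deq,d,k)$ ($cp(k)=R_1$, $\sigma=\sigma'\cdot d$): $\sigma:=\sigma'$, $rv(k)=d$, $cp(k)=R_2$; $lin(deq,\mathtt{EMPTY},k)$ ($cp(k)=R_1$, $\sigma=\epsilon$): $rv(k)=\mathtt{EMPTY}$, $cp(k)=R_2$; $ret(deq,d,k)$ ($cp(k)=R_2$,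 $rv(k)=d$): $cp(k)=R_3$. $AbsQ$: alphabet $C\cup R\cup Lin(deq)$; states $(O,<,\ell,rv,cp)$ with $O\subseteq\mathit{Ops}$, $<$ a strict partial order on $O$, $\ell:O\to\mathit{Vals}\times\{\mathtt{PEND},\mathtt{COMP}\}$ (components $\ell_1,\ell_2$), $rv$ partial to values, $cp$ partial to $\{A_1,A_2,R_1,R_2,R_3\}$, all empty initially. $\mathtt{COMP}(O)=\{k\in O:\ell_2(k)=\mathtt{COMP}\}$; $min(O)$ = $<$-minimal elements; $<\uparrow k'$ = $<$ without pairs containing $k'$. Transitions: $inv(enq,d,k)$ ($k\notin dom(cp)$, $d\ne\mathtt{EMPTY}$): add $k$ to $O$, add $\mathtt{COMP}(O)\times\{k\}$ to $<$, $\ell(k)=(d,\mathtt{PEND})$, $cp(k)=A_1$; $inv(deq,k)$ ($k\notin dom(cp)$): $cp(k)=R_1$; $ret(deq,d,k)$ ($cp(k)=R_2,rv(k)=d$): $cp(k)=R_3$; $ret(enq,k)$ with $cp(k)=A_1$: if $k\in O$ with $\ell(k)=(d,\mathtt{PEND})$ set $\ell(k)=(d,\mathtt{COMP})$, and in either case ($k\in O$ or $k\notin O$) set $cp(k)=A_2$; $lin(deq,d,k)$ ($cp(k)=R_1$, $d\neq\mathtt{EMPTY}$, some $k'\in min(O)$ with $\ell_1(k')=d$): remove $k'$ from $O$, $<:=<\uparrow k'$, $rv(k)=d$, $cp(k)=R_2$; $lin(deq,\mathtt{EMPTY},k)$ ($cp(k)=R_1$, all $o\in O$ have $\ell_2(o)=\mathtt{PEND}$):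 $rv(k)=\mathtt{EMPTY}$, $cp(k)=R_2$. *)

theory Defs
  imports Main
begin

datatype val = Val nat | EMPTY

type_synonym op = nat

datatype 'x act =
    InvEnq nat op          (* inv(enq,d,k), d <> EMPTY *)
  | InvDeq op
  | RetEnq op
  | RetDeq val op
  | LinEnq nat op
  | LinDeq val op
  | Other 'x

definition Calls :: "'x act set" where
  "Calls = range (\<lambda>(d,k). InvEnq d k) \<union> range InvDeq"

definition Rets :: "'x act set" where
  "Rets = range RetEnq \<union> range (\<lambda>(d,k). RetDeq d k)"

definition LinDeqs :: "'x act set" where
  "LinDeqs = range (\<lambda>(d,k). LinDeq d k)"

definition Gamma :: "'x act set" where
  "Gamma = Calls \<union> Rets \<union> LinDeqs"

fun opid :: "'x act \<Rightarrow> op" where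
  "opid (InvEnq d k) = k"
| "opid (InvDeq k) = k"
| "opid (RetEnq k) = k"
| "opid (RetDeq d k) = k"
| "opid (LinEnq d k) = k"
| "opid (LinDeq d k) = k"
| "opid (Other x) = 0"

record ('s, 'l) lts =
  states :: "'s set"
  alpha  :: "'l set"
  init   :: 's
  trans  :: "('s \<times> 'l \<times> 's) set"

definition lts_wf :: "('s, 'l) lts \<Rightarrow> bool" where
  "lts_wf A \<longleftrightarrow> init A \<in> states A \<and> trans A \<subseteq> states A \<times> alpha A \<times> states A"

inductive path :: "('s, 'l) lts \<Rightarrow> 's \<Rightarrow> 'l list \<Rightarrow> 's \<Rightarrow> bool" for A where
  path_nil: "path A s [] s"
| path_cons: "(s, a, s') \<in> trans A \<Longrightarrow> path A s' w t \<Longrightarrow> path A s (a # w) t"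

definition traces :: "('s, 'l) lts \<Rightarrow> 'l list set" where
  "traces A = {w. \<exists>t. path A (init A) w t}"

definition proj :: "'l set \<Rightarrow> 'l list \<Rightarrow> 'l list" where
  "proj G w = filter (\<lambda>a. a \<in> G) w"

definition well_formed :: "'x act list \<Rightarrow> bool" where
  "well_formed w \<longleftrightarrow>
     (\<forall>i < length w. w ! i \<in> Rets \<longrightarrow>
        (\<exists>j < i. w ! j \<in> Calls \<and> opid (w ! j) = opid (w ! i))) \<and>
     (\<forall>i j. i < j \<and> j < length w \<and> w ! i \<in> Calls \<and> w ! j \<in> Calls
        \<longrightarrow> opid (w ! i) \<noteq> opid (w ! j)) \<and>
     (\<forall>i j. i < j \<and> j < length w \<and> w ! i \<in> Rets \<and> w ! j \<in> Rets
        \<longrightarrow> opid (w ! i) \<noteq> opid (w ! j))"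

definition no_dup_enq :: "'x act list \<Rightarrow> bool" where
  "no_dup_enq w \<longleftrightarrow>
     (\<forall>i j d k k'. i < j \<and> j < length w \<and> w ! i = InvEnq d k \<and> w ! j = InvEnq d k' \<longrightarrow> False)"

definition queue_impl :: "('s, 'x act) lts \<Rightarrow> bool" where
  "queue_impl L \<longleftrightarrow>
     lts_wf L \<and> Calls \<union> Rets \<subseteq> alpha L \<and>
     (\<forall>w \<in> traces L. well_formed w \<and> no_dup_enq w) \<and>
     (\<forall>w1 w2 c. w1 @ w2 \<in> traces L \<and> c \<in> Calls \<and> well_formed (w1 @ c # w2)
        \<and> no_dup_enq (w1 @ c # w2) \<longrightarrow> w1 @ c # w2 \<in> traces L) \<and>
     (\<forall>w1 w2 a c. w1 @ a # c # w2 \<in> traces L \<and> c \<in> Calls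
        \<longrightarrow> w1 @ c # a # w2 \<in> traces L) \<and>
     (\<forall>w1 w2 r a. w1 @ r # a # w2 \<in> traces L \<and> r \<in> Rets
        \<longrightarrow> w1 @ a # r # w2 \<in> traces L)"

definition fixed_deq_lin :: "('s, 'x act) lts \<Rightarrow> bool" where
  "fixed_deq_lin L \<longleftrightarrow>
     Calls \<union> Rets \<union> LinDeqs \<subseteq> alpha L \<and>
     (\<forall>w \<in> traces L. \<forall>i < length w. \<forall>d k. w ! i = RetDeq d k \<longrightarrow>
        (\<exists>j < i. w ! j = LinDeq d k))"

definition fwd_sim ::
  "'l set \<Rightarrow> ('s1, 'l) lts \<Rightarrow> ('s2, 'l) lts \<Rightarrow> ('s1 \<times> 's2) set \<Rightarrow> bool" where
  "fwd_sim G L1 L2 fs \<longleftrightarrow>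
     {u. (init L1, u) \<in> fs} = {init L2} \<and>
     (\<forall>s g s' u. (s, g, s') \<in> trans L1 \<and> g \<in> G \<and> (s, u) \<in> fs \<longrightarrow>
        (\<exists>u' w1 w2. (s', u') \<in> fs \<and> path L2 u (w1 @ g # w2) u' \<and>
           set w1 \<subseteq> alpha L2 - G \<and> set w2 \<subseteq> alpha L2 - G)) \<and>
     (\<forall>s e s' u. (s, e, s') \<in> trans L1 \<and> e \<in> alpha L1 - G \<and> (s, u) \<in> fs \<longrightarrow>
        (\<exists>u' w. (s', u') \<in> fs \<and> path L2 u w u' \<and> set w \<subseteq> alpha L2 - G))"

datatype cpoint = A1 | A | A2 | R1 | R2 | R3

record absq0 =
  q0seq :: "val list"
  q0in  :: "op \<Rightarrow> val option"
  q0rv  :: "op \<Rightarrow> val option"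
  q0cp  :: "op \<Rightarrow> cpoint option"

inductive absq0_step :: "absq0 \<Rightarrow> 'x act \<Rightarrow> absq0 \<Rightarrow> bool" where
  inv_enq: "k \<notin> dom (q0cp s) \<Longrightarrow>
     absq0_step s (InvEnq d k) (s\<lparr>q0in := (q0in s)(k \<mapsto> Val d), q0cp := (q0cp s)(k \<mapsto> A1)\<rparr>)"
| lin_enq: "q0cp s k = Some A1 \<Longrightarrow> q0in s k = Some (Val d) \<Longrightarrow>
     absq0_step s (LinEnq d k) (s\<lparr>q0seq := Val d # q0seq s, q0cp := (q0cp s)(k \<mapsto> A)\<rparr>)"
| ret_enq: "q0cp s k = Some A \<Longrightarrow>
     absq0_step s (RetEnq k) (s\<lparr>q0cp := (q0cp s)(k \<mapsto> A2)\<rparr>)"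
| inv_deq: "k \<notin> dom (q0cp s) \<Longrightarrow>
     absq0_step s (InvDeq k) (s\<lparr>q0cp := (q0cp s)(k \<mapsto> R1)\<rparr>)"
| lin_deq: "q0cp s k = Some R1 \<Longrightarrow> q0seq s = sq' @ [d] \<Longrightarrow>
     absq0_step s (LinDeq d k)
       (s\<lparr>q0seq := sq', q0rv := (q0rv s)(k \<mapsto> d), q0cp := (q0cp s)(k \<mapsto> R2)\<rparr>)"
| lin_deq_empty: "q0cp s k = Some R1 \<Longrightarrow> q0seq s = [] \<Longrightarrow>
     absq0_step s (LinDeq EMPTY k)
       (s\<lparr>q0rv := (q0rv s)(k \<mapsto> EMPTY), q0cp := (q0cp s)(k \<mapsto> R2)\<rparr>)"
| ret_deq: "q0cp s k = Some R2 \<Longrightarrow> q0rv s k = Some d \<Longrightarrow>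
     absq0_step s (RetDeq d k) (s\<lparr>q0cp := (q0cp s)(k \<mapsto> R3)\<rparr>)"

definition AbsQ0 :: "(absq0, 'x act) lts" where
  "AbsQ0 = \<lparr> states = UNIV,
             alpha = Calls \<union> Rets \<union> LinDeqs \<union> range (\<lambda>(d,k). LinEnq d k),
             init = \<lparr>q0seq = [], q0in = Map.empty, q0rv = Map.empty, q0cp = Map.empty\<rparr>,
             trans = {(s, a, s'). absq0_step s a s'} \<rparr>"

datatype status = PEND | COMP

record absq =
  qO   :: "op set"
  qlt  :: "(op \<times> op) set"
  qlab :: "op \<Rightarrow> (val \<times> status) option"
  qrv  :: "op \<Rightarrow> val option"
  qcp  :: "op \<Rightarrow> cpoint option"

definition COMPs :: "absq \<Rightarrow> op set" where
  "COMPs s = {k \<in> qO s. \<exists>d. qlab s k = Some (d, COMP)}"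

definition minO :: "absq \<Rightarrow> op set" where
  "minO s = {k \<in> qO s. \<not> (\<exists>k'' \<in> qO s. (k'', k) \<in> qlt s)}"

inductive absq_step :: "absq \<Rightarrow> 'x act \<Rightarrow> absq \<Rightarrow> bool" where
  inv_enq: "k \<notin> dom (qcp s) \<Longrightarrow>
     absq_step s (InvEnq d k)
       (s\<lparr>qO := qO s \<union> {k}, qlt := qlt s \<union> COMPs s \<times> {k},
          qlab := (qlab s)(k \<mapsto> (Val d, PEND)), qcp := (qcp s)(k \<mapsto> A1)\<rparr>)"
| inv_deq: "k \<notin> dom (qcp s) \<Longrightarrow>
     absq_step s (InvDeq k) (s\<lparr>qcp := (qcp s)(k \<mapsto> R1)\<rparr>)"
| ret_deq: "qcp s k = Some R2 \<Longrightarrow> qrv s k = Some d \<Longrightarrow>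
     absq_step s (RetDeq d k) (s\<lparr>qcp := (qcp s)(k \<mapsto> R3)\<rparr>)"
| ret_enq_pend: "qcp s k = Some A1 \<Longrightarrow> k \<in> qO s \<Longrightarrow> qlab s k = Some (d, PEND) \<Longrightarrow>
     absq_step s (RetEnq k)
       (s\<lparr>qlab := (qlab s)(k \<mapsto> (d, COMP)), qcp := (qcp s)(k \<mapsto> A2)\<rparr>)"
| ret_enq_other: "qcp s k = Some A1 \<Longrightarrow> \<not> (k \<in> qO s \<and> (\<exists>d. qlab s k = Some (d, PEND))) \<Longrightarrow>
     absq_step s (RetEnq k) (s\<lparr>qcp := (qcp s)(k \<mapsto> A2)\<rparr>)"
| lin_deq: "qcp s k = Some R1 \<Longrightarrow> d \<noteq> EMPTY \<Longrightarrow> k' \<in> minO s \<Longrightarrow>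
     qlab s k' = Some (d, st) \<Longrightarrow>
     absq_step s (LinDeq d k)
       (s\<lparr>qO := qO s - {k'}, qlt := {(a, b) \<in> qlt s. a \<noteq> k' \<and> b \<noteq> k'},
          qlab := (qlab s)(k' := None),
          qrv := (qrv s)(k \<mapsto> d), qcp := (qcp s)(k \<mapsto> R2)\<rparr>)"
| lin_deq_empty: "qcp s k = Some R1 \<Longrightarrow> (\<forall>o' \<in> qO s. \<exists>d. qlab s o' = Some (d, PEND)) \<Longrightarrow>
     absq_step s (LinDeq EMPTY k)
       (s\<lparr>qrv := (qrv s)(k \<mapsto> EMPTY), qcp := (qcp s)(k \<mapsto> R2)\<rparr>)"

definition AbsQ :: "(absq, 'x act) lts" where
  "AbsQ = \<lparr> states = UNIV,
            alpha = Calls \<union> Rets \<union> LinDeqs,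
            init = \<lparr>qO = {}, qlt = {}, qlab = Map.empty, qrv = Map.empty, qcp = Map.empty\<rparr>,
            trans = {(s, a, s'). absq_step s a s'} \<rparr>"

end

(*
  The Gamma-traces of AbsQ are exactly the Gamma-projections of the traces of AbsQ0, so the
  left-hand side says that every Gamma-trace of L is a trace of AbsQ.

  AbsQ0 fixes the order of the queue when an enqueue is linearized; AbsQ keeps only the partial
  order in which an enqueue precedes every enqueue invoked after it has returned, and lets a
  dequeue remove any minimal element.  An AbsQ0 state "linearizes" an AbsQ state if its queue is
  a linear extension of that order.  This relation is a forward simulation of AbsQ0 by AbsQ.
  Conversely, any run of AbsQ is matched backwards by AbsQ0: each AbsQ step is preceded by a
  linearizing state, which for an invocation of enqueue or a dequeue returning EMPTY requires
  undoing and redoing the linearization of pending enqueues.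

  Given the trace inclusion, pairing the states of L and of AbsQ reached by runs with the same
  Gamma-projection gives a forward simulation: AbsQ is deterministic on runs in which no value
  is enqueued twice, and well-formedness forbids visible loops through the initial state of L.
  Conversely a forward simulation maps runs of L to runs of AbsQ with the same Gamma-trace.
*)

theory Submission
  imports Defs
begin

section \<open>Runs, projections and forward simulations\<close>

inductive_simps path_Nil_iff: "path M s [] t"
inductive_simps path_Cons_iff: "path M s (a # w) t"

lemma path_append_iff: "path M s (w1 @ w2) t \<longleftrightarrow> (\<exists>m. path M s w1 m \<and> path M m w2 t)"
  by (induction w1 arbitrary: s) (auto simp: path_Nil_iff path_Cons_iff)

lemma path_snoc_iff: "path M s (w @ [a]) t \<longleftrightarrow> (\<exists>m. path M s w m \<and> (m, a, t) \<in> trans M)"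
  by (auto simp: path_append_iff path_Nil_iff path_Cons_iff)

lemma path_single_iff: "path M s [a] t \<longleftrightarrow> (s, a, t) \<in> trans M"
  by (simp add: path_Cons_iff path_Nil_iff)

lemma proj_simps [simp]:
  "proj G [] = []"
  "proj G (a # w) = (if a \<in> G then a # proj G w else proj G w)"
  "proj G (w1 @ w2) = proj G w1 @ proj G w2"
  by (simp_all add: proj_def)

lemma set_proj: "set (proj G w) \<subseteq> set w"
  by (auto simp: proj_def)

lemma fwd_sim_path:
  assumes sim: "fwd_sim G L1 L2 fs" and wf: "lts_wf L1" and alpha: "alpha L2 \<subseteq> G"
  shows "path L1 s w t \<Longrightarrow> (s, u) \<in> fs \<Longrightarrow> \<exists>u'. (t, u') \<in> fs \<and> path L2 u (proj G w) u'"
proof (induction arbitrary: u rule: path.induct)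
  case (path_nil s)
  then show ?case by (auto intro: path.path_nil)
next
  case (path_cons s a s' w t)
  have invisible: "alpha L2 - G = {}" using alpha by blast
  have "\<exists>u''. (s', u'') \<in> fs \<and> path L2 u (proj G [a]) u''"
  proof (cases "a \<in> G")
    case True
    with sim path_cons obtain u'' w1 w2 where "(s', u'') \<in> fs" "path L2 u (w1 @ a # w2) u''"
      "set w1 \<subseteq> alpha L2 - G" "set w2 \<subseteq> alpha L2 - G"
      unfolding fwd_sim_def by blast
    moreover from this(3,4) invisible have "w1 = []" "w2 = []" by simp_all
    ultimately show ?thesis using True by auto
  next
    case False
    with wf path_cons have "a \<in> alpha L1 - G" by (auto simp: lts_wf_def)
    with sim path_cons obtain u'' w' where "(s', u'') \<in> fs" "path L2 u w' u''" "set w' \<subseteq> alpha L2 - G"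
      unfolding fwd_sim_def by blast
    moreover from this(3) invisible have "w' = []" by simp
    ultimately show ?thesis using False by (auto simp: path_Nil_iff)
  qed
  then obtain u'' where "(s', u'') \<in> fs" "path L2 u (proj G [a]) u''" by blast
  moreover obtain u' where "(t, u') \<in> fs" "path L2 u'' (proj G w) u'"
    using path_cons.IH[OF \<open>(s', u'') \<in> fs\<close>] by blast
  ultimately have "path L2 u (proj G ([a] @ w)) u'" "(t, u') \<in> fs"
    by (auto simp only: proj_simps(3) path_append_iff)
  then show ?case by auto
qed

lemma fwd_sim_proj_traces:
  assumes "fwd_sim G L1 L2 fs" and "lts_wf L1" and "alpha L2 \<subseteq> G"
  shows "proj G ` traces L1 \<subseteq> traces L2"
proof
  fix p assume "p \<in> proj G ` traces L1"
  then obtain w t where "p = proj G w" "path L1 (init L1) w t"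
    by (auto simp: traces_def)
  moreover have "(init L1, init L2) \<in> fs"
    using assms(1) by (auto simp: fwd_sim_def)
  ultimately show "p \<in> traces L2"
    using fwd_sim_path[OF assms] unfolding traces_def by blast
qed

lemma reachable_pairs_fwd_sim:
  fixes L1 :: "('s1, 'l) lts" and L2 :: "('s2, 'l) lts"
  assumes alpha: "alpha L2 \<subseteq> G"
    and incl: "proj G ` traces L1 \<subseteq> traces L2"
    and det: "\<And>w u1 u2. w \<in> traces L1 \<Longrightarrow> path L2 (init L2) (proj G w) u1 \<Longrightarrow>
                 path L2 (init L2) (proj G w) u2 \<Longrightarrow> u1 = u2"
    and loop: "\<And>w. path L1 (init L1) w (init L1) \<Longrightarrow> proj G w = []"
  shows "fwd_sim G L1 L2 {(s, u). \<exists>w. path L1 (init L1) w s \<and> path L2 (init L2) (proj G w) u}"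
    (is "fwd_sim G L1 L2 ?fs")
  unfolding fwd_sim_def
proof (intro conjI allI impI)
  show "{u. (init L1, u) \<in> ?fs} = {init L2}"
    using loop by (auto simp: path_Nil_iff intro: path.path_nil)
next
  fix s g s' u assume step: "(s, g, s') \<in> trans L1 \<and> g \<in> G \<and> (s, u) \<in> ?fs"
  then obtain w where w: "path L1 (init L1) w s" "path L2 (init L2) (proj G w) u" by blast
  with step have w': "path L1 (init L1) (w @ [g]) s'" by (auto simp: path_snoc_iff)
  with incl have "proj G (w @ [g]) \<in> traces L2" unfolding traces_def by blast
  with step obtain m u' where m: "path L2 (init L2) (proj G w) m" "(m, g, u') \<in> trans L2"
    by (auto simp: traces_def path_snoc_iff)
  have "m = u" using det[OF _ m(1) w(2)] w(1) by (auto simp: traces_def)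
  with m step w' have "(s', u') \<in> ?fs" "path L2 u [g] u'"
    by (auto simp: path_snoc_iff path_single_iff intro!: exI[of _ "w @ [g]"])
  then show "\<exists>u' w1 w2. (s', u') \<in> ?fs \<and> path L2 u (w1 @ g # w2) u' \<and>
      set w1 \<subseteq> alpha L2 - G \<and> set w2 \<subseteq> alpha L2 - G"
    by (intro exI[of _ u'] exI[of _ "[]"]) simp
next
  fix s e s' u assume step: "(s, e, s') \<in> trans L1 \<and> e \<in> alpha L1 - G \<and> (s, u) \<in> ?fs"
  then obtain w where "path L1 (init L1) w s" "path L2 (init L2) (proj G w) u" by blast
  with step have "path L1 (init L1) (w @ [e]) s'" "path L2 (init L2) (proj G (w @ [e])) u"
    by (auto simp: path_snoc_iff)
  then have "(s', u) \<in> ?fs" by blast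
  then show "\<exists>u' w. (s', u') \<in> ?fs \<and> path L2 u w u' \<and> set w \<subseteq> alpha L2 - G"
    by (intro exI[of _ u] exI[of _ "[]"]) (simp add: path.path_nil)
qed

lemma Gamma_simps [simp]:
  "InvEnq d k \<in> Gamma" "InvDeq k \<in> Gamma" "RetEnq k \<in> Gamma" "RetDeq v k \<in> Gamma"
  "LinDeq v k \<in> Gamma" "LinEnq d k \<notin> Gamma" "Other x \<notin> Gamma"
  by (auto simp: Gamma_def Calls_def Rets_def LinDeqs_def image_iff)

lemma alpha_AbsQ: "alpha AbsQ = Gamma"
  by (simp add: AbsQ_def Gamma_def)

lemma trans_AbsQ [simp]: "(s, a, t) \<in> trans AbsQ \<longleftrightarrow> absq_step s a t"
  by (simp add: AbsQ_def)

lemma trans_AbsQ0 [simp]: "(s, a, t) \<in> trans AbsQ0 \<longleftrightarrow> absq0_step s a t"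
  by (simp add: AbsQ0_def)

definition absq_init :: absq where
  "absq_init = \<lparr>qO = {}, qlt = {}, qlab = Map.empty, qrv = Map.empty, qcp = Map.empty\<rparr>"

definition absq0_init :: absq0 where
  "absq0_init = \<lparr>q0seq = [], q0in = Map.empty, q0rv = Map.empty, q0cp = Map.empty\<rparr>"

lemma init_AbsQ [simp]: "init AbsQ = absq_init"
  by (simp add: AbsQ_def absq_init_def)

lemma init_AbsQ0 [simp]: "init AbsQ0 = absq0_init"
  by (simp add: AbsQ0_def absq0_init_def)

lemma absq0_step_visible_or_LinEnq: "absq0_step s a t \<Longrightarrow> a \<in> Gamma \<or> (\<exists>d k. a = LinEnq d k)"
  by (induction rule: absq0_step.induct) auto

lemma absq_step_from_init_is_call: "absq_step absq_init a u \<Longrightarrow> a \<in> Calls"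
  by (erule absq_step.cases) (auto simp: absq_init_def Calls_def)

definition lab_of :: "absq \<Rightarrow> op \<Rightarrow> val" where
  "lab_of u k = fst (the (qlab u k))"

definition absq_inv :: "absq \<Rightarrow> bool" where
  "absq_inv u \<longleftrightarrow> finite (qO u) \<and> (\<forall>k. k \<in> qO u \<longleftrightarrow> qlab u k \<noteq> None) \<and>
     (\<forall>k v st. qlab u k = Some (v, st) \<longrightarrow>
        v \<noteq> EMPTY \<and> qcp u k = Some (if st = COMP then A2 else A1)) \<and>
     qlt u \<subseteq> COMPs u \<times> qO u \<and> Relation.trans (qlt u) \<and> irrefl (qlt u) \<and>
     (\<forall>k. qcp u k \<noteq> Some A)"

lemma absq_inv_init: "absq_inv absq_init"
  by (simp add: absq_inv_def absq_init_def Relation.trans_def irrefl_def)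

lemma absq_inv_O_iff: "absq_inv u \<Longrightarrow> k \<in> qO u \<longleftrightarrow> qlab u k \<noteq> None"
  by (simp add: absq_inv_def)

lemma absq_inv_O_lab:
  "absq_inv u \<Longrightarrow> k \<in> qO u \<Longrightarrow>
   \<exists>v st. qlab u k = Some (v, st) \<and> v \<noteq> EMPTY \<and> qcp u k = Some (if st = COMP then A2 else A1)"
  unfolding absq_inv_def by fastforce

lemma absq_inv_O_cp: "absq_inv u \<Longrightarrow> k \<in> qO u \<Longrightarrow> qcp u k = Some A1 \<or> qcp u k = Some A2"
  using absq_inv_O_lab by fastforce

lemma absq_inv_lab_None:
  "absq_inv u \<Longrightarrow> qcp u k \<noteq> Some A1 \<Longrightarrow> qcp u k \<noteq> Some A2 \<Longrightarrow> qlab u k = None"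
  using absq_inv_O_iff absq_inv_O_cp by blast

lemma absq_inv_step: "absq_step u a u' \<Longrightarrow> absq_inv u \<Longrightarrow> absq_inv u'"
proof (induction rule: absq_step.induct)
  case (inv_enq k s d)
  then have "qlab s k = None" by (simp add: domIff absq_inv_lab_None)
  moreover from this have "k \<notin> qO s" using inv_enq.prems by (simp add: absq_inv_O_iff)
  ultimately show ?case using inv_enq
    unfolding absq_inv_def COMPs_def Relation.trans_def irrefl_def by (auto split: if_splits)
next
  case (lin_deq s k d k' st)
  then have "qlab s k = None" by (simp add: absq_inv_lab_None)
  with lin_deq show ?case
    unfolding absq_inv_def COMPs_def minO_def Relation.trans_def irrefl_def by (auto split: if_splits)
next
  case (ret_enq_other s k)
  have "qlab s k = None"
  proof (rule ccontr)
    assume "qlab s k \<noteq> None"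
    then obtain v st where "k \<in> qO s" "qlab s k = Some (v, st)" "qcp s k = Some (if st = COMP then A2 else A1)"
      using ret_enq_other absq_inv_O_iff[of s k] absq_inv_O_lab[of s k] by auto
    with ret_enq_other show False by (cases st) auto
  qed
  with ret_enq_other show ?case
    unfolding absq_inv_def COMPs_def by (auto split: if_splits)
next
  case (inv_deq k s)
  then have "qlab s k = None" by (simp add: domIff absq_inv_lab_None)
  with inv_deq show ?case unfolding absq_inv_def COMPs_def by (auto split: if_splits)
next
  case (ret_deq s k d)
  then have "qlab s k = None" by (simp add: absq_inv_lab_None)
  with ret_deq show ?case unfolding absq_inv_def COMPs_def by (auto split: if_splits)
next
  case (lin_deq_empty s k)
  then have "qlab s k = None" by (simp add: absq_inv_lab_None)
  with lin_deq_empty show ?case unfolding absq_inv_def COMPs_def by (auto split: if_splits)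
qed (auto simp: absq_inv_def COMPs_def split: if_splits)

lemma absq_inv_path: "path AbsQ u p v \<Longrightarrow> absq_inv u \<Longrightarrow> absq_inv v"
  by (induction rule: path.induct) (auto intro: absq_inv_step)

lemma absq_inv_COMP:
  "absq_inv u \<Longrightarrow> k \<in> qO u \<Longrightarrow> qcp u k = Some A2 \<Longrightarrow> k \<in> COMPs u"
  using absq_inv_O_lab[of u k] unfolding COMPs_def by (auto split: if_splits)

lemma absq_inv_lab_Val: "absq_inv u \<Longrightarrow> k \<in> qO u \<Longrightarrow> \<exists>n. lab_of u k = Val n"
  using absq_inv_O_lab[of u k] by (auto simp: lab_of_def) (metis val.exhaust)

lemma absq_inv_lt:
  "absq_inv u \<Longrightarrow> (j, k) \<in> qlt u \<Longrightarrow> j \<in> qO u \<and> qcp u j = Some A2 \<and> k \<in> qO u"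
  unfolding absq_inv_def COMPs_def by fastforce

lemma absq_inv_PEND:
  "absq_inv u \<Longrightarrow> k \<in> qO u \<Longrightarrow> qcp u k = Some A1 \<Longrightarrow> \<exists>d. qlab u k = Some (d, PEND)"
  using absq_inv_O_lab[of u k] by (auto split: if_splits) (metis status.exhaust)

definition enq_values_unique :: "'x act list \<Rightarrow> bool" where
  "enq_values_unique p \<longleftrightarrow> (\<forall>n k k'. InvEnq n k \<in> set p \<longrightarrow> InvEnq n k' \<in> set p \<longrightarrow> k = k')"

lemma no_dup_enq_imp_enq_values_unique: "no_dup_enq w \<Longrightarrow> enq_values_unique w"
  unfolding enq_values_unique_def
proof (intro allI impI)
  fix n k k' assume nd: "no_dup_enq w" and "InvEnq n k \<in> set w" "InvEnq n k' \<in> set w"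
  then obtain i j where "i < length w" "w ! i = InvEnq n k" "j < length w" "w ! j = InvEnq n k'"
    by (auto simp: in_set_conv_nth)
  with nd show "k = k'"
    unfolding no_dup_enq_def by (cases i j rule: linorder_cases) auto
qed

lemma absq_step_deterministic:
  assumes "absq_step u a u1" and "absq_step u a u2" and inj: "inj_on (lab_of u) (qO u)"
  shows "u1 = u2"
  using assms(1)
proof (cases rule: absq_step.cases)
  case (lin_deq k d k' st)
  from assms(2) show ?thesis
  proof (cases rule: absq_step.cases)
    case (lin_deq _ _ k'' st')
    with \<open>a = LinDeq d k\<close> have "k'' \<in> qO u" and lab'': "qlab u k'' = Some (d, st')"
      by (simp_all add: minO_def)
    moreover have "k' \<in> qO u" using \<open>k' \<in> minO u\<close> by (simp add: minO_def)
    moreover have "lab_of u k' = lab_of u k''"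
      using \<open>qlab u k' = Some (d, st)\<close> lab'' by (simp add: lab_of_def)
    ultimately have "k' = k''" using inj_onD[OF inj] by blast
    with lin_deq \<open>a = LinDeq d k\<close> \<open>u1 = _\<close> show ?thesis by simp
  qed (use lin_deq in auto)
qed (use assms(2) in \<open>cases rule: absq_step.cases; auto\<close>)+

lemma absq_step_lab_of_enqueued:
  assumes "absq_step u a u'" and "\<forall>k\<in>qO u. \<exists>n. lab_of u k = Val n \<and> InvEnq n k \<in> set p"
  shows "\<forall>k\<in>qO u'. \<exists>n. lab_of u' k = Val n \<and> InvEnq n k \<in> set (p @ [a])"
  using assms by (induction rule: absq_step.induct) (auto simp: lab_of_def)

lemma absq_path_lab_of_enqueued:
  "path AbsQ absq_init p u \<Longrightarrow> \<forall>k\<in>qO u. \<exists>n. lab_of u k = Val n \<and> InvEnq n k \<in> set p"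
proof (induction p arbitrary: u rule: rev_induct)
  case (snoc a p)
  then obtain m where m: "path AbsQ absq_init p m" "absq_step m a u"
    by (auto simp: path_snoc_iff)
  show ?case by (rule absq_step_lab_of_enqueued[OF m(2) snoc.IH[OF m(1)]])
qed (simp add: path_Nil_iff absq_init_def)

lemma absq_path_deterministic:
  "path AbsQ absq_init p u1 \<Longrightarrow> path AbsQ absq_init p u2 \<Longrightarrow> enq_values_unique p \<Longrightarrow> u1 = u2"
proof (induction p arbitrary: u1 u2 rule: rev_induct)
  case Nil
  then show ?case by (simp add: path_Nil_iff)
next
  case (snoc a p)
  then obtain m1 m2 where m: "path AbsQ absq_init p m1" "absq_step m1 a u1"
    "path AbsQ absq_init p m2" "absq_step m2 a u2"
    by (auto simp: path_snoc_iff)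
  moreover have uniq: "enq_values_unique p"
    using snoc.prems(3) by (auto simp: enq_values_unique_def)
  ultimately have "m2 = m1" using snoc.IH by blast
  have labs: "\<forall>k\<in>qO m1. \<exists>n. lab_of m1 k = Val n \<and> InvEnq n k \<in> set p"
    using m(1) by (rule absq_path_lab_of_enqueued)
  have "inj_on (lab_of m1) (qO m1)"
  proof (rule inj_onI)
    fix k1 k2 assume "k1 \<in> qO m1" "k2 \<in> qO m1" "lab_of m1 k1 = lab_of m1 k2"
    moreover obtain n1 n2 where "lab_of m1 k1 = Val n1" "InvEnq n1 k1 \<in> set p"
      "lab_of m1 k2 = Val n2" "InvEnq n2 k2 \<in> set p"
      using labs \<open>k1 \<in> qO m1\<close> \<open>k2 \<in> qO m1\<close> by blast
    ultimately have "InvEnq n1 k1 \<in> set p" "InvEnq n1 k2 \<in> set p" by simp_all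
    with uniq show "k1 = k2" unfolding enq_values_unique_def by blast
  qed
  with m \<open>m2 = m1\<close> show ?case by (auto intro: absq_step_deterministic)
qed

definition abs_cp :: "cpoint option \<Rightarrow> cpoint option" where
  "abs_cp c = (if c = Some A then Some A1 else c)"

lemma abs_cp_simps [simp]:
  "abs_cp None = None" "abs_cp (Some c) = Some (if c = A then A1 else c)"
  by (simp_all add: abs_cp_def)

lemma abs_cp_eq_Some_iff:
  "abs_cp c = Some x \<longleftrightarrow> (if x = A1 then c = Some A1 \<or> c = Some A else x \<noteq> A \<and> c = Some x)"
  by (cases c) (auto simp: abs_cp_def)

text \<open>An AbsQ0 state s linearizes an AbsQ state u when the enqueues that s has already
  linearized (control point A) are still pending in u, and the queue of s holds the values of
  the enqueues ls, newest first, in an order that never puts an enqueue before one that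
  precedes it in u.\<close>
definition linearizes :: "absq0 \<Rightarrow> op list \<Rightarrow> absq \<Rightarrow> bool" where
  "linearizes s ls u \<longleftrightarrow>
     (\<forall>k. abs_cp (q0cp s k) = qcp u k) \<and>
     (\<forall>k. q0cp s k = Some A1 \<longrightarrow> k \<in> qO u) \<and>
     (\<forall>k. q0cp s k \<notin> {Some A1, Some A, Some A2} \<longrightarrow> q0in s k = None) \<and>
     (\<forall>k\<in>qO u. q0in s k = Some (lab_of u k)) \<and>
     q0rv s = qrv u \<and>
     distinct ls \<and> set ls = {k \<in> qO u. q0cp s k \<in> {Some A, Some A2}} \<and>
     q0seq s = map (lab_of u) ls \<and> sorted_wrt (\<lambda>k k'. (k, k') \<notin> qlt u) ls"

lemma linearizesD:
  assumes "linearizes s ls u"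
  shows "abs_cp (q0cp s k) = qcp u k"
    and "q0cp s k = Some A1 \<Longrightarrow> k \<in> qO u"
    and "q0cp s k \<notin> {Some A1, Some A, Some A2} \<Longrightarrow> q0in s k = None"
    and "k \<in> qO u \<Longrightarrow> q0in s k = Some (lab_of u k)"
    and "q0rv s = qrv u"
    and "distinct ls"
    and "set ls = {k \<in> qO u. q0cp s k \<in> {Some A, Some A2}}"
    and "q0seq s = map (lab_of u) ls"
    and "sorted_wrt (\<lambda>k k'. (k, k') \<notin> qlt u) ls"
  using assms unfolding linearizes_def by auto

section \<open>Simulating AbsQ0 by AbsQ\<close>

lemma linearizes_lin_enq:
  assumes lin: "linearizes s ls u" and inv: "absq_inv u" and step: "absq0_step s (LinEnq d k) s'"
  shows "linearizes s' (k # ls) u"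
proof -
  from step have cp: "q0cp s k = Some A1" and "q0in s k = Some (Val d)"
    and s': "s' = s\<lparr>q0seq := Val d # q0seq s, q0cp := (q0cp s)(k \<mapsto> A)\<rparr>"
    by (auto elim: absq0_step.cases)
  with linearizesD[OF lin] have "k \<in> qO u" "lab_of u k = Val d" "k \<notin> set ls"
    by auto
  moreover have "qcp u k = Some A1" using linearizesD(1)[OF lin, of k] cp by simp
  moreover have "(k, j) \<notin> qlt u" for j
    using inv \<open>qcp u k = Some A1\<close> unfolding absq_inv_def COMPs_def by auto
  ultimately show ?thesis
    using lin cp unfolding s' linearizes_def by auto
qed

text \<open>A predecessor of the oldest queued enqueue would be completed, hence queued as well, and
  then sorted after it.\<close>
lemma linearizes_oldest_minO:
  assumes lin: "linearizes s (ls @ [k']) u" and inv: "absq_inv u"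
  shows "k' \<in> minO u"
proof -
  note L = linearizesD[OF lin]
  have "(j, k') \<notin> qlt u" for j
  proof
    assume lt: "(j, k') \<in> qlt u"
    then have "j \<in> qO u" "qcp u j = Some A2" using absq_inv_lt[OF inv] by auto
    moreover from this(2) have "q0cp s j = Some A2"
      using L(1)[of j] by (simp add: abs_cp_eq_Some_iff)
    moreover have "j \<noteq> k'" using lt inv by (auto simp: absq_inv_def irrefl_def)
    ultimately have "j \<in> set ls" using L(7) by auto
    with L(9) lt show False by (simp add: sorted_wrt_append)
  qed
  moreover have "k' \<in> qO u" using L(7) by auto
  ultimately show ?thesis by (simp add: minO_def)
qed

lemma linearizes_empty_all_pending:
  assumes lin: "linearizes s [] u" and inv: "absq_inv u" and "j \<in> qO u"
  shows "\<exists>d. qlab u j = Some (d, PEND)"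
proof -
  note L = linearizesD[OF lin]
  have "q0cp s j \<noteq> Some A2" using L(7) \<open>j \<in> qO u\<close> by auto
  then have "qcp u j = Some A1"
    using absq_inv_O_cp[OF inv \<open>j \<in> qO u\<close>] L(1)[of j] by (auto simp: abs_cp_eq_Some_iff)
  with absq_inv_PEND[OF inv \<open>j \<in> qO u\<close>] show ?thesis .
qed

lemma absq0_step_simulated:
  assumes step: "absq0_step s a s'" and vis: "a \<in> Gamma"
    and lin: "linearizes s ls u" and inv: "absq_inv u"
  shows "\<exists>u' ls'. absq_step u a u' \<and> linearizes s' ls' u'"
  using step
proof (cases rule: absq0_step.cases)
  case (inv_enq k d)
  note L = linearizesD[OF lin]
  have "qcp u k = None" using L(1)[of k] inv_enq by (simp add: domIff)
  then have "k \<notin> qO u" using absq_inv_O_cp[OF inv] by force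
  define u' where "u' = u\<lparr>qO := qO u \<union> {k}, qlt := qlt u \<union> COMPs u \<times> {k},
    qlab := (qlab u)(k \<mapsto> (Val d, PEND)), qcp := (qcp u)(k \<mapsto> A1)\<rparr>"
  have "absq_step u (InvEnq d k) u'"
    unfolding u'_def using \<open>qcp u k = None\<close> by (intro absq_step.inv_enq) auto
  moreover have "linearizes s' ls u'"
    using lin inv_enq \<open>k \<notin> qO u\<close> unfolding linearizes_def u'_def
    by (auto simp: lab_of_def elim: sorted_wrt_mono_rel[rotated])
  ultimately show ?thesis using inv_enq by blast
next
  case (lin_enq k d)
  with vis show ?thesis by simp
next
  case (ret_enq k)
  note L = linearizesD[OF lin]
  have "qcp u k = Some A1" using L(1)[of k] ret_enq by simp
  show ?thesis
  proof (cases "k \<in> qO u")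
    case True
    then obtain v where "qlab u k = Some (v, PEND)"
      using absq_inv_PEND[OF inv] \<open>qcp u k = Some A1\<close> by blast
    define u' where "u' = u\<lparr>qlab := (qlab u)(k \<mapsto> (v, COMP)), qcp := (qcp u)(k \<mapsto> A2)\<rparr>"
    have "absq_step u (RetEnq k) u'"
      unfolding u'_def using \<open>qcp u k = Some A1\<close> True \<open>qlab u k = _\<close> by (rule absq_step.ret_enq_pend)
    moreover have "linearizes s' ls u'"
      using lin ret_enq True \<open>qlab u k = _\<close> unfolding linearizes_def u'_def
      by (auto simp: lab_of_def)
    ultimately show ?thesis using ret_enq by blast
  next
    case False
    define u' where "u' = u\<lparr>qcp := (qcp u)(k \<mapsto> A2)\<rparr>"
    have "absq_step u (RetEnq k) u'"
      unfolding u'_def using \<open>qcp u k = Some A1\<close> False by (intro absq_step.ret_enq_other) auto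
    moreover have "linearizes s' ls u'"
      using lin ret_enq False unfolding linearizes_def u'_def by (auto simp: lab_of_def)
    ultimately show ?thesis using ret_enq by blast
  qed
next
  case (inv_deq k)
  note L = linearizesD[OF lin]
  have "qcp u k = None" using L(1)[of k] inv_deq by (simp add: domIff)
  then have "k \<notin> qO u" using absq_inv_O_cp[OF inv] by force
  define u' where "u' = u\<lparr>qcp := (qcp u)(k \<mapsto> R1)\<rparr>"
  have "absq_step u (InvDeq k) u'"
    unfolding u'_def using \<open>qcp u k = None\<close> by (intro absq_step.inv_deq) auto
  moreover have "linearizes s' ls u'"
    using lin inv_deq \<open>k \<notin> qO u\<close> unfolding linearizes_def u'_def by (auto simp: lab_of_def)
  ultimately show ?thesis using inv_deq by blast
next
  case (ret_deq k d)
  note L = linearizesD[OF lin]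
  have "qcp u k = Some R2" "qrv u k = Some d" using L(1)[of k] L(5) ret_deq by simp_all
  then have "k \<notin> qO u" using absq_inv_O_cp[OF inv] by force
  define u' where "u' = u\<lparr>qcp := (qcp u)(k \<mapsto> R3)\<rparr>"
  have "absq_step u (RetDeq d k) u'"
    unfolding u'_def using \<open>qcp u k = Some R2\<close> \<open>qrv u k = Some d\<close> by (rule absq_step.ret_deq)
  moreover have "linearizes s' ls u'"
    using lin ret_deq \<open>k \<notin> qO u\<close> unfolding linearizes_def u'_def by (auto simp: lab_of_def)
  ultimately show ?thesis using ret_deq by blast
next
  case (lin_deq k sq' d)
  note L = linearizesD[OF lin]
  have "qcp u k = Some R1" using L(1)[of k] lin_deq by simp
  then have "k \<notin> qO u" using absq_inv_O_cp[OF inv] by force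
  obtain ls' k' where ls: "ls = ls' @ [k']" and "sq' = map (lab_of u) ls'" and "d = lab_of u k'"
    using L(8) lin_deq by (cases ls rule: rev_exhaust) auto
  have "k' \<in> qO u" using L(7) ls by auto
  then obtain st where lab: "qlab u k' = Some (d, st)" and "d \<noteq> EMPTY"
    using absq_inv_O_lab[OF inv] \<open>d = lab_of u k'\<close> by (fastforce simp: lab_of_def)
  have "k' \<in> minO u" using linearizes_oldest_minO lin inv unfolding ls by blast
  define u' where "u' = u\<lparr>qO := qO u - {k'}, qlt := {(a, b) \<in> qlt u. a \<noteq> k' \<and> b \<noteq> k'},
    qlab := (qlab u)(k' := None), qrv := (qrv u)(k \<mapsto> d), qcp := (qcp u)(k \<mapsto> R2)\<rparr>"
  have "absq_step u (LinDeq d k) u'"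
    unfolding u'_def using \<open>qcp u k = Some R1\<close> \<open>d \<noteq> EMPTY\<close> \<open>k' \<in> minO u\<close> lab
    by (rule absq_step.lin_deq)
  moreover have "linearizes s' ls' u'"
  proof -
    have "k' \<notin> set ls'" "distinct ls'" using L(6) ls by auto
    then have "map (lab_of u') ls' = sq'"
      using \<open>sq' = _\<close> by (auto simp: u'_def lab_of_def)
    moreover have "sorted_wrt (\<lambda>j j'. (j, j') \<notin> qlt u') ls'"
      using L(9) by (auto simp: ls sorted_wrt_append u'_def elim: sorted_wrt_mono_rel[rotated])
    moreover have "set ls' = {j \<in> qO u'. q0cp s' j \<in> {Some A, Some A2}}"
      using L(7) \<open>k' \<notin> set ls'\<close> \<open>k \<notin> qO u\<close> lin_deq by (auto simp: ls u'_def)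
    moreover have "q0in s k = None" using L(3)[of k] lin_deq by simp
    moreover have "q0cp s k' \<noteq> Some A1"
    proof -
      have "k' \<in> set ls" using ls by simp
      with L(7) show ?thesis by auto
    qed
    ultimately show ?thesis
      using lin lin_deq \<open>k \<notin> qO u\<close> \<open>distinct ls'\<close> unfolding linearizes_def u'_def
      by (auto simp: lab_of_def)
  qed
  ultimately show ?thesis using lin_deq by blast
next
  case (lin_deq_empty k)
  note L = linearizesD[OF lin]
  have "qcp u k = Some R1" using L(1)[of k] lin_deq_empty by simp
  then have "k \<notin> qO u" using absq_inv_O_cp[OF inv] by force
  have "ls = []" using L(8) lin_deq_empty by simp
  with lin inv have pending: "\<forall>j\<in>qO u. \<exists>d. qlab u j = Some (d, PEND)"
    by (blast intro: linearizes_empty_all_pending)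
  define u' where "u' = u\<lparr>qrv := (qrv u)(k \<mapsto> EMPTY), qcp := (qcp u)(k \<mapsto> R2)\<rparr>"
  have "absq_step u (LinDeq EMPTY k) u'"
    unfolding u'_def using \<open>qcp u k = Some R1\<close> by (intro absq_step.lin_deq_empty pending)
  moreover have "linearizes s' ls u'"
    using lin lin_deq_empty \<open>k \<notin> qO u\<close> unfolding linearizes_def u'_def by (auto simp: lab_of_def)
  ultimately show ?thesis using lin_deq_empty by blast
qed

lemma linearizes_init: "linearizes absq0_init [] absq_init"
  by (simp add: linearizes_def absq0_init_def absq_init_def)

lemma absq0_path_simulated:
  "path AbsQ0 s w t \<Longrightarrow> linearizes s ls u \<Longrightarrow> absq_inv u \<Longrightarrow>
   \<exists>u' ls'. path AbsQ u (proj Gamma w) u' \<and> linearizes t ls' u'"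
proof (induction arbitrary: ls u rule: path.induct)
  case (path_nil s)
  then show ?case by (auto intro: path.path_nil)
next
  case (path_cons s a s' w t)
  then have step: "absq0_step s a s'" by simp
  show ?case
  proof (cases "a \<in> Gamma")
    case True
    then obtain u' ls' where "absq_step u a u'" "linearizes s' ls' u'"
      using absq0_step_simulated[OF step _ path_cons.prems] by blast
    moreover from this(1) have "absq_inv u'" using path_cons.prems(2) by (rule absq_inv_step)
    ultimately show ?thesis
      using path_cons.IH True by (fastforce intro: path.path_cons)
  next
    case False
    then obtain d k where "a = LinEnq d k"
      using absq0_step_visible_or_LinEnq[OF step] by blast
    with step path_cons.prems have "linearizes s' (k # ls) u"
      by (blast intro: linearizes_lin_enq)
    with path_cons.IH path_cons.prems(2) False show ?thesis by simp
  qed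
qed

lemma proj_traces_AbsQ0_subset: "proj Gamma ` traces AbsQ0 \<subseteq> traces AbsQ"
  using absq0_path_simulated[OF _ linearizes_init absq_inv_init]
  by (fastforce simp: traces_def)

section \<open>Matching AbsQ backwards by AbsQ0\<close>

text \<open>The input value of an enqueue is read only by its own linearization step, so it no
  longer matters once the enqueue is linearized.\<close>
definition agree_on_live_inputs :: "absq0 \<Rightarrow> absq0 \<Rightarrow> bool" where
  "agree_on_live_inputs s1 s2 \<longleftrightarrow>
     q0seq s1 = q0seq s2 \<and> q0rv s1 = q0rv s2 \<and> q0cp s1 = q0cp s2 \<and>
     (\<forall>k. q0cp s1 k \<notin> {Some A, Some A2} \<longrightarrow> q0in s1 k = q0in s2 k)"

lemma agree_on_live_inputs_refl [simp]: "agree_on_live_inputs s s"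
  by (simp add: agree_on_live_inputs_def)

lemma absq0_step_agree_on_live_inputs:
  assumes "absq0_step s1 a t1" and agree: "agree_on_live_inputs s1 s2"
  shows "\<exists>t2. absq0_step s2 a t2 \<and> agree_on_live_inputs t1 t2"
  using assms(1)
proof (cases rule: absq0_step.cases)
  case (inv_enq k d)
  let ?t2 = "s2\<lparr>q0in := (q0in s2)(k \<mapsto> Val d), q0cp := (q0cp s2)(k \<mapsto> A1)\<rparr>"
  have "absq0_step s2 a ?t2" using inv_enq agree
    unfolding agree_on_live_inputs_def by (auto intro: absq0_step.inv_enq)
  moreover have "agree_on_live_inputs t1 ?t2" using inv_enq agree
    unfolding agree_on_live_inputs_def by auto
  ultimately show ?thesis by blast
next
  case (lin_enq k d)
  let ?t2 = "s2\<lparr>q0seq := Val d # q0seq s2, q0cp := (q0cp s2)(k \<mapsto> A)\<rparr>"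
  have "absq0_step s2 a ?t2" using lin_enq agree
    unfolding agree_on_live_inputs_def by (auto intro: absq0_step.lin_enq)
  moreover have "agree_on_live_inputs t1 ?t2" using lin_enq agree
    unfolding agree_on_live_inputs_def by auto
  ultimately show ?thesis by blast
next
  case (ret_enq k)
  let ?t2 = "s2\<lparr>q0cp := (q0cp s2)(k \<mapsto> A2)\<rparr>"
  have "absq0_step s2 a ?t2" using ret_enq agree
    unfolding agree_on_live_inputs_def by (auto intro: absq0_step.ret_enq)
  moreover have "agree_on_live_inputs t1 ?t2" using ret_enq agree
    unfolding agree_on_live_inputs_def by auto
  ultimately show ?thesis by blast
next
  case (inv_deq k)
  let ?t2 = "s2\<lparr>q0cp := (q0cp s2)(k \<mapsto> R1)\<rparr>"
  have "absq0_step s2 a ?t2" using inv_deq agree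
    unfolding agree_on_live_inputs_def by (auto intro: absq0_step.inv_deq)
  moreover have "q0in s1 k = q0in s2 k"
    using inv_deq agree unfolding agree_on_live_inputs_def by (simp add: domIff)
  then have "agree_on_live_inputs t1 ?t2" using inv_deq agree
    unfolding agree_on_live_inputs_def by auto
  ultimately show ?thesis by blast
next
  case (lin_deq k sq' d)
  let ?t2 = "s2\<lparr>q0seq := sq', q0rv := (q0rv s2)(k \<mapsto> d), q0cp := (q0cp s2)(k \<mapsto> R2)\<rparr>"
  have "absq0_step s2 a ?t2" using lin_deq agree
    unfolding agree_on_live_inputs_def by (auto intro: absq0_step.lin_deq)
  moreover have "agree_on_live_inputs t1 ?t2" using lin_deq agree
    unfolding agree_on_live_inputs_def by auto
  ultimately show ?thesis by blast
next
  case (lin_deq_empty k)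
  let ?t2 = "s2\<lparr>q0rv := (q0rv s2)(k \<mapsto> EMPTY), q0cp := (q0cp s2)(k \<mapsto> R2)\<rparr>"
  have "absq0_step s2 a ?t2" using lin_deq_empty agree
    unfolding agree_on_live_inputs_def by (auto intro: absq0_step.lin_deq_empty)
  moreover have "agree_on_live_inputs t1 ?t2" using lin_deq_empty agree
    unfolding agree_on_live_inputs_def by auto
  ultimately show ?thesis by blast
next
  case (ret_deq k d)
  let ?t2 = "s2\<lparr>q0cp := (q0cp s2)(k \<mapsto> R3)\<rparr>"
  have "absq0_step s2 a ?t2" using ret_deq agree
    unfolding agree_on_live_inputs_def by (auto intro: absq0_step.ret_deq)
  moreover have "agree_on_live_inputs t1 ?t2" using ret_deq agree
    unfolding agree_on_live_inputs_def by auto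
  ultimately show ?thesis by blast
qed

lemma absq0_path_agree_on_live_inputs:
  "path AbsQ0 s1 w t1 \<Longrightarrow> agree_on_live_inputs s1 s2 \<Longrightarrow> \<exists>t2. path AbsQ0 s2 w t2"
proof (induction arbitrary: s2 rule: path.induct)
  case (path_cons s a s' w t)
  then obtain t2 where "absq0_step s2 a t2" "agree_on_live_inputs s' t2"
    using absq0_step_agree_on_live_inputs by fastforce
  with path_cons.IH show ?case by (meson path.path_cons trans_AbsQ0)
qed (auto intro: path.path_nil)

lemma absq0_path_lin_enqs:
  assumes "distinct xs" and "\<forall>x\<in>set xs. q0cp s x = Some A1 \<and> q0in s x = Some (Val (f x))"
  shows "path AbsQ0 s (map (\<lambda>x. LinEnq (f x) x) (rev xs))
    (s\<lparr>q0seq := map (\<lambda>x. Val (f x)) xs @ q0seq s,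
       q0cp := (\<lambda>j. if j \<in> set xs then Some A else q0cp s j)\<rparr>)"
  using assms
proof (induction xs)
  case Nil
  then show ?case by (simp add: path.path_nil)
next
  case (Cons x xs)
  let ?s = "s\<lparr>q0seq := map (\<lambda>x. Val (f x)) xs @ q0seq s,
    q0cp := (\<lambda>j. if j \<in> set xs then Some A else q0cp s j)\<rparr>"
  have "absq0_step ?s (LinEnq (f x) x) (?s\<lparr>q0seq := Val (f x) # q0seq ?s, q0cp := (q0cp ?s)(x \<mapsto> A)\<rparr>)"
    using Cons.prems by (intro absq0_step.lin_enq) auto
  moreover have "?s\<lparr>q0seq := Val (f x) # q0seq ?s, q0cp := (q0cp ?s)(x \<mapsto> A)\<rparr> =
    s\<lparr>q0seq := map (\<lambda>x. Val (f x)) (x # xs) @ q0seq s,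
      q0cp := (\<lambda>j. if j \<in> set (x # xs) then Some A else q0cp s j)\<rparr>"
    by (auto simp: fun_eq_iff)
  ultimately show ?case
    using Cons by (auto simp: path_append_iff path_single_iff)
qed

lemma absq0_path_relinearize:
  assumes "distinct xs" and "\<forall>x\<in>set xs. q0cp s x = Some A \<and> q0in s x = Some (Val (f x))"
    and "q0seq s = map (\<lambda>x. Val (f x)) xs @ sq"
  shows "path AbsQ0 (s\<lparr>q0seq := sq, q0cp := (\<lambda>j. if j \<in> set xs then Some A1 else q0cp s j)\<rparr>)
    (map (\<lambda>x. LinEnq (f x) x) (rev xs)) s"
proof -
  let ?s = "s\<lparr>q0seq := sq, q0cp := (\<lambda>j. if j \<in> set xs then Some A1 else q0cp s j)\<rparr>"
  have "path AbsQ0 ?s (map (\<lambda>x. LinEnq (f x) x) (rev xs))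
    (?s\<lparr>q0seq := map (\<lambda>x. Val (f x)) xs @ q0seq ?s,
       q0cp := (\<lambda>j. if j \<in> set xs then Some A else q0cp ?s j)\<rparr>)"
    using assms(1,2) by (intro absq0_path_lin_enqs) auto
  moreover have "(\<lambda>j. if j \<in> set xs then Some A else q0cp ?s j) = q0cp s"
    using assms(2) by (auto simp: fun_eq_iff)
  ultimately show ?thesis using assms(3)[symmetric] by simp
qed

lemma proj_LinEnqs [simp]: "proj Gamma (map (\<lambda>x. LinEnq (f x) x) xs) = []"
  by (induction xs) auto

text \<open>To undo an invocation of enqueue k, undo the linearization of k and of all enqueues
  linearized after it; these are still pending, as a completed one would precede k in u'.\<close>
lemma inv_enq_queue_split:
  assumes inv: "absq_inv u" and lin: "linearizes s' ls' u'"
    and u': "u' = u\<lparr>qO := qO u \<union> {k}, qlt := qlt u \<union> COMPs u \<times> {k},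
      qlab := (qlab u)(k \<mapsto> (Val d, PEND)), qcp := (qcp u)(k \<mapsto> A1)\<rparr>"
  obtains xs post where "ls' = xs @ post" and "k \<notin> set post"
    and "\<forall>x\<in>set xs. q0cp s' x = Some A" and "k \<in> set xs \<or> q0cp s' k = Some A1"
proof -
  note L = linearizesD[OF lin]
  have cp': "qcp u' j = (if j = k then Some A1 else qcp u j)" for j
    using u' by simp
  have "q0cp s' k \<in> {Some A1, Some A}" using L(1)[of k] cp'[of k] by (auto simp: abs_cp_eq_Some_iff)
  obtain xs post where ls': "ls' = xs @ post" and "k \<notin> set post"
    and xs: "xs = [] \<or> (\<exists>pre. xs = pre @ [k])"
  proof (cases "k \<in> set ls'")
    case True
    then obtain pre post where "ls' = pre @ k # post" by (meson split_list)
    with L(6) show thesis by (intro that[of "pre @ [k]" post]) auto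
  qed (auto intro: that[of "[]" ls'])
  have "q0cp s' x = Some A" if "x \<in> set xs" for x
  proof (cases "x = k")
    case True
    with that ls' L(7) \<open>q0cp s' k \<in> _\<close> show ?thesis by auto
  next
    case False
    with xs that obtain pre where pre: "xs = pre @ [k]" "x \<in> set pre" by auto
    with L(9) ls' have "(x, k) \<notin> qlt u'" by (simp add: sorted_wrt_append)
    then have "x \<notin> COMPs u" using u' by simp
    moreover have "x \<in> qO u" "q0cp s' x \<in> {Some A, Some A2}"
      using that ls' L(7) False u' by auto
    ultimately show ?thesis
      using absq_inv_COMP[OF inv] L(1)[of x] cp'[of x] False by (auto simp: abs_cp_eq_Some_iff)
  qed
  moreover have "k \<in> set xs \<or> q0cp s' k = Some A1"
  proof (cases "xs = []")
    case True
    with ls' \<open>k \<notin> set post\<close> have "k \<notin> set ls'" by simp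
    moreover have "k \<in> qO u'" using u' by simp
    ultimately show ?thesis using L(7) \<open>q0cp s' k \<in> _\<close> by auto
  qed (use xs in auto)
  ultimately show thesis using that ls' \<open>k \<notin> set post\<close> by blast
qed

lemma inv_enq_backward:
  assumes inv: "absq_inv u" and lin: "linearizes s' ls' u'" and new: "k \<notin> dom (qcp u)"
    and u': "u' = u\<lparr>qO := qO u \<union> {k}, qlt := qlt u \<union> COMPs u \<times> {k},
      qlab := (qlab u)(k \<mapsto> (Val d, PEND)), qcp := (qcp u)(k \<mapsto> A1)\<rparr>"
  shows "\<exists>s ls v. linearizes s ls u \<and> path AbsQ0 s v s' \<and> proj Gamma v = [InvEnq d k]"
proof -
  note L = linearizesD[OF lin]
  have "k \<notin> qO u" using absq_inv_O_cp[OF inv, of k] new by auto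
  have lab': "lab_of u' j = (if j = k then Val d else lab_of u j)" for j
    using u' by (simp add: lab_of_def)
  have cp': "qcp u' j = (if j = k then Some A1 else qcp u j)" for j
    using u' by simp
  obtain xs post where ls': "ls' = xs @ post" and "k \<notin> set post"
    and xs_A: "\<forall>x\<in>set xs. q0cp s' x = Some A" and k_cp: "k \<in> set xs \<or> q0cp s' k = Some A1"
    using inv_enq_queue_split[OF inv lin u'] by blast
  have xs_O: "set xs \<subseteq> qO u'" using ls' L(7) by auto
  have "\<forall>x\<in>set xs. \<exists>n. lab_of u' x = Val n"
  proof
    fix x assume "x \<in> set xs"
    with xs_O have "x \<in> qO u'" by blast
    then show "\<exists>n. lab_of u' x = Val n"
      using absq_inv_lab_Val[OF inv, of x] lab'[of x] u' by (cases "x = k") auto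
  qed
  then obtain f where f: "\<forall>x\<in>set xs. lab_of u' x = Val (f x)" by metis
  define sa where "sa = s'\<lparr>q0seq := map (lab_of u) post,
    q0cp := (\<lambda>j. if j \<in> set xs then Some A1 else q0cp s' j)\<rparr>"
  define s where "s = sa\<lparr>q0in := (q0in sa)(k := None), q0cp := (q0cp sa)(k := None)\<rparr>"
  have "q0in s' k = Some (Val d)" using L(4)[of k] lab' u' by simp
  with k_cp have "absq0_step s (InvEnq d k) sa"
    using absq0_step.inv_enq[of k s d] by (auto simp: s_def sa_def fun_upd_idem domIff)
  moreover have "path AbsQ0 sa (map (\<lambda>x. LinEnq (f x) x) (rev xs)) s'"
    unfolding sa_def
  proof (rule absq0_path_relinearize)
    show "distinct xs" using L(6) ls' by simp
    show "\<forall>x\<in>set xs. q0cp s' x = Some A \<and> q0in s' x = Some (Val (f x))"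
      using xs_A xs_O L(4) f by (auto simp: subset_iff)
    show "q0seq s' = map (\<lambda>x. Val (f x)) xs @ map (lab_of u) post"
      using f L(8) ls' lab' \<open>k \<notin> set post\<close> by simp
  qed
  ultimately have "path AbsQ0 s (InvEnq d k # map (\<lambda>x. LinEnq (f x) x) (rev xs)) s'"
    by (auto intro: path.path_cons)
  moreover have "linearizes s post u"
  proof -
    have "distinct (xs @ post)" using L(6) ls' by simp
    moreover have "sorted_wrt (\<lambda>j j'. (j, j') \<notin> qlt u) post"
      using L(9) ls' u' by (auto simp: sorted_wrt_append elim: sorted_wrt_mono_rel[rotated])
    moreover have "set post = {j \<in> qO u. q0cp s j \<in> {Some A, Some A2}}"
      using L(7) ls' \<open>distinct (xs @ post)\<close> \<open>k \<notin> set post\<close> \<open>k \<notin> qO u\<close> u'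
      by (auto simp: s_def sa_def)
    moreover have "qcp u x = Some A1" if "x \<in> set xs" "x \<noteq> k" for x
      using xs_A that L(1)[of x] cp'[of x] by simp
    ultimately show ?thesis
      using L(1,2,3,4,5) cp' lab' xs_A k_cp xs_O new \<open>k \<notin> qO u\<close> u'
      unfolding linearizes_def s_def sa_def by (auto simp: subset_iff domIff)
  qed
  ultimately show ?thesis by force
qed

lemma lin_deq_backward:
  assumes inv: "absq_inv u" and lin: "linearizes s' ls' u'"
    and deq: "qcp u k = Some R1" and min: "k' \<in> minO u" and lab: "qlab u k' = Some (d, st)"
    and u': "u' = u\<lparr>qO := qO u - {k'}, qlt := {(a, b) \<in> qlt u. a \<noteq> k' \<and> b \<noteq> k'},
      qlab := (qlab u)(k' := None), qrv := (qrv u)(k \<mapsto> d), qcp := (qcp u)(k \<mapsto> R2)\<rparr>"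
  shows "\<exists>s ls s''. linearizes s ls u \<and> absq0_step s (LinDeq d k) s'' \<and>
    agree_on_live_inputs s' s''"
proof -
  note L = linearizesD[OF lin]
  have "k' \<in> qO u" using min by (simp add: minO_def)
  moreover have "k \<notin> qO u" using absq_inv_O_cp[OF inv, of k] deq by auto
  ultimately have "k \<noteq> k'" by blast
  have cp': "qcp u' j = (if j = k then Some R2 else qcp u j)" for j
    using u' by simp
  have lab': "lab_of u' j = lab_of u j" if "j \<noteq> k'" for j
    using u' that by (simp add: lab_of_def)
  have "q0cp s' k = Some R2" using L(1)[of k] cp'[of k] by (simp add: abs_cp_eq_Some_iff)
  have "k' \<notin> qO u'" "k' \<notin> set ls'" using u' L(7) by auto
  have "q0cp s' k' \<in> {Some A, Some A2}"
    using L(1)[of k'] L(2)[of k'] cp'[of k'] absq_inv_O_cp[OF inv \<open>k' \<in> qO u\<close>] \<open>k \<noteq> k'\<close>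
      \<open>k' \<notin> qO u'\<close> by (auto simp: abs_cp_eq_Some_iff)
  define s'' where "s'' = s'\<lparr>q0in := (q0in s')(k' \<mapsto> d)\<rparr>"
  define s where "s = s''\<lparr>q0seq := q0seq s' @ [d], q0rv := qrv u, q0cp := (q0cp s')(k \<mapsto> R1)\<rparr>"
  have "agree_on_live_inputs s' s''"
    using \<open>q0cp s' k' \<in> _\<close> by (auto simp: agree_on_live_inputs_def s''_def)
  moreover have "absq0_step s (LinDeq d k) s''"
  proof -
    have "(qrv u)(k \<mapsto> d) = q0rv s'" using L(5) u' by simp
    then show ?thesis
      using absq0_step.lin_deq[of s k "q0seq s'" d] \<open>q0cp s' k = Some R2\<close>
      by (simp add: s_def s''_def fun_upd_idem)
  qed
  moreover have "linearizes s (ls' @ [k']) u"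
  proof -
    have "sorted_wrt (\<lambda>j j'. (j, j') \<notin> qlt u) (ls' @ [k'])"
      using L(9) L(7) \<open>k' \<notin> set ls'\<close> min u'
      by (auto simp: sorted_wrt_append minO_def elim: sorted_wrt_mono_rel[rotated])
    moreover have "q0seq s' = map (lab_of u) ls'"
      using L(8) lab' \<open>k' \<notin> set ls'\<close> by (metis map_eq_conv)
    moreover have "lab_of u k' = d" using lab by (simp add: lab_of_def)
    moreover have "q0in s' k = None" using L(3)[of k] \<open>q0cp s' k = Some R2\<close> by simp
    ultimately show ?thesis
      using L(1,2,3,4,6,7) cp' lab' \<open>k \<notin> qO u\<close> \<open>k' \<in> qO u\<close> \<open>k' \<notin> set ls'\<close> \<open>k \<noteq> k'\<close>
        \<open>q0cp s' k' \<in> _\<close> deq u'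
      unfolding linearizes_def s_def s''_def by auto
  qed
  ultimately show ?thesis by blast
qed

lemma lin_deq_empty_backward:
  assumes inv: "absq_inv u" and lin: "linearizes s' ls' u'"
    and deq: "qcp u k = Some R1" and pending: "\<forall>j \<in> qO u. \<exists>d. qlab u j = Some (d, PEND)"
    and u': "u' = u\<lparr>qrv := (qrv u)(k \<mapsto> EMPTY), qcp := (qcp u)(k \<mapsto> R2)\<rparr>"
  shows "\<exists>s ls v. linearizes s ls u \<and> path AbsQ0 s v s' \<and> proj Gamma v = [LinDeq EMPTY k]"
proof -
  note L = linearizesD[OF lin]
  have "k \<notin> qO u" using absq_inv_O_cp[OF inv, of k] deq by auto
  have cp': "qcp u' j = (if j = k then Some R2 else qcp u j)" for j
    using u' by simp
  have "q0cp s' k = Some R2" using L(1)[of k] cp'[of k] by (simp add: abs_cp_eq_Some_iff)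
  have lab': "lab_of u' = lab_of u" using u' by (simp add: lab_of_def fun_eq_iff)
  have O': "qO u' = qO u" using u' by simp
  have ls'_O: "set ls' \<subseteq> qO u" using L(7) O' by auto
  with \<open>k \<notin> qO u\<close> have "k \<notin> set ls'" by blast
  text \<open>Nothing is completed in u, so the whole queue of s' is linearized but pending.\<close>
  have ls'_A1: "qcp u x = Some A1" and ls'_A: "q0cp s' x = Some A" if "x \<in> set ls'" for x
  proof -
    have "x \<in> qO u" "x \<noteq> k" using that ls'_O \<open>k \<notin> qO u\<close> by auto
    then show "qcp u x = Some A1"
      using pending absq_inv_O_lab[OF inv, of x] by fastforce
    then show "q0cp s' x = Some A"
      using that L(1)[of x] L(7) cp'[of x] \<open>x \<noteq> k\<close> by (auto simp: abs_cp_eq_Some_iff)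
  qed
  have "\<forall>x\<in>set ls'. \<exists>n. lab_of u x = Val n"
    using ls'_O absq_inv_lab_Val[OF inv] by blast
  then obtain f where f: "\<forall>x\<in>set ls'. lab_of u x = Val (f x)" by metis
  define sa where "sa = s'\<lparr>q0seq := [], q0cp := (\<lambda>j. if j \<in> set ls' then Some A1 else q0cp s' j)\<rparr>"
  define s where "s = sa\<lparr>q0rv := qrv u, q0cp := (q0cp sa)(k \<mapsto> R1)\<rparr>"
  have "(qrv u)(k \<mapsto> EMPTY) = q0rv s'" using L(5) u' by simp
  with \<open>q0cp s' k = Some R2\<close> \<open>k \<notin> set ls'\<close> have "absq0_step s (LinDeq EMPTY k) sa"
    using absq0_step.lin_deq_empty[of s k] by (simp add: s_def sa_def fun_upd_idem)
  moreover have "path AbsQ0 sa (map (\<lambda>x. LinEnq (f x) x) (rev ls')) s'"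
    unfolding sa_def
  proof (rule absq0_path_relinearize)
    show "distinct ls'" by (rule L(6))
    show "\<forall>x\<in>set ls'. q0cp s' x = Some A \<and> q0in s' x = Some (Val (f x))"
      using ls'_A ls'_O L(4) O' lab' f by (auto simp: subset_iff)
    show "q0seq s' = map (\<lambda>x. Val (f x)) ls' @ []"
      using f L(8) lab' by simp
  qed
  ultimately have "path AbsQ0 s (LinDeq EMPTY k # map (\<lambda>x. LinEnq (f x) x) (rev ls')) s'"
    by (auto intro: path.path_cons)
  moreover have "linearizes s [] u"
    unfolding linearizes_def
  proof (intro conjI allI impI ballI)
    fix j
    show "abs_cp (q0cp s j) = qcp u j"
      using L(1)[of j] cp'[of j] ls'_A1 deq by (auto simp: s_def sa_def)
    show "q0cp s j = Some A1 \<Longrightarrow> j \<in> qO u"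
      using L(2)[of j] O' ls'_O by (auto simp: s_def sa_def split: if_splits)
    show "q0cp s j \<notin> {Some A1, Some A, Some A2} \<Longrightarrow> q0in s j = None"
      using L(3)[of j] \<open>q0cp s' k = Some R2\<close> by (auto simp: s_def sa_def split: if_splits)
  next
    fix j assume "j \<in> qO u"
    then show "q0in s j = Some (lab_of u j)" using L(4)[of j] O' lab' by (simp add: s_def sa_def)
  next
    show "set [] = {j \<in> qO u. q0cp s j \<in> {Some A, Some A2}}"
      using L(7) O' \<open>k \<notin> qO u\<close> by (auto simp: s_def sa_def)
  qed (simp_all add: s_def sa_def)
  ultimately show ?thesis by force
qed

lemma visible_step_backward:
  assumes "linearizes s ls u" and "absq0_step s a s'" and "a \<in> Gamma"
  shows "\<exists>s ls v s''. linearizes s ls u \<and> path AbsQ0 s v s'' \<and> proj Gamma v = [a] \<and>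
     agree_on_live_inputs s' s''"
proof -
  have "path AbsQ0 s [a] s'" "proj Gamma [a] = [a]"
    using assms(2,3) by (simp_all add: path_single_iff)
  with assms(1) agree_on_live_inputs_refl show ?thesis by blast
qed

lemma absq_step_backward:
  assumes step: "absq_step u a u'" and inv: "absq_inv u" and lin: "linearizes s' ls' u'"
  shows "\<exists>s ls v s''. linearizes s ls u \<and> path AbsQ0 s v s'' \<and> proj Gamma v = [a] \<and>
    agree_on_live_inputs s' s''"
  using step
proof cases
  case (inv_deq k)
  note L = linearizesD[OF lin]
  let ?s = "s'\<lparr>q0cp := (q0cp s')(k := None)\<rparr>"
  have "q0cp s' k = Some R1" using L(1)[of k] inv_deq by (simp add: abs_cp_eq_Some_iff)
  moreover from this have "q0in s' k = None" using L(3)[of k] by simp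
  moreover have "k \<notin> qO u" using absq_inv_O_cp[OF inv, of k] inv_deq by auto
  ultimately have "linearizes ?s ls' u"
    using lin inv_deq unfolding linearizes_def by (auto simp: lab_of_def)
  moreover have "absq0_step ?s (InvDeq k) s'"
    using absq0_step.inv_deq[of k ?s] \<open>q0cp s' k = Some R1\<close> by (simp add: fun_upd_idem)
  ultimately show ?thesis using inv_deq visible_step_backward[of ?s ls' u "InvDeq k" s'] by simp
next
  case (ret_deq k d)
  note L = linearizesD[OF lin]
  let ?s = "s'\<lparr>q0cp := (q0cp s')(k \<mapsto> R2)\<rparr>"
  have "q0cp s' k = Some R3" using L(1)[of k] ret_deq by (simp add: abs_cp_eq_Some_iff)
  moreover from this have "q0in s' k = None" using L(3)[of k] by simp
  moreover have "k \<notin> qO u" using absq_inv_O_cp[OF inv, of k] ret_deq by auto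
  ultimately have "linearizes ?s ls' u"
    using lin ret_deq unfolding linearizes_def by (auto simp: lab_of_def)
  moreover have "absq0_step ?s (RetDeq d k) s'"
    using absq0_step.ret_deq[of ?s k d] \<open>q0cp s' k = Some R3\<close> L(5) ret_deq
    by (simp add: fun_upd_idem)
  ultimately show ?thesis using ret_deq visible_step_backward[of ?s ls' u "RetDeq d k" s'] by simp
next
  case (ret_enq_pend k d)
  note L = linearizesD[OF lin]
  let ?s = "s'\<lparr>q0cp := (q0cp s')(k \<mapsto> A)\<rparr>"
  have "q0cp s' k = Some A2" using L(1)[of k] ret_enq_pend by (simp add: abs_cp_eq_Some_iff)
  then have "linearizes ?s ls' u"
    using lin ret_enq_pend unfolding linearizes_def by (auto simp: lab_of_def)
  moreover have "absq0_step ?s (RetEnq k) s'"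
    using absq0_step.ret_enq[of ?s k] \<open>q0cp s' k = Some A2\<close> by (simp add: fun_upd_idem)
  ultimately show ?thesis using ret_enq_pend visible_step_backward[of ?s ls' u "RetEnq k" s'] by simp
next
  case (ret_enq_other k)
  note L = linearizesD[OF lin]
  let ?s = "s'\<lparr>q0cp := (q0cp s')(k \<mapsto> A)\<rparr>"
  have "q0cp s' k = Some A2" using L(1)[of k] ret_enq_other by (simp add: abs_cp_eq_Some_iff)
  moreover have "k \<notin> qO u" using absq_inv_PEND[OF inv] ret_enq_other by blast
  ultimately have "linearizes ?s ls' u"
    using lin ret_enq_other unfolding linearizes_def by (auto simp: lab_of_def)
  moreover have "absq0_step ?s (RetEnq k) s'"
    using absq0_step.ret_enq[of ?s k] \<open>q0cp s' k = Some A2\<close> by (simp add: fun_upd_idem)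
  ultimately show ?thesis using ret_enq_other visible_step_backward[of ?s ls' u "RetEnq k" s'] by simp
next
  case (inv_enq k d)
  with inv_enq_backward[OF inv lin] show ?thesis by fastforce
next
  case (lin_deq k d k' st)
  then obtain s ls s'' where "linearizes s ls u" "absq0_step s a s''" "agree_on_live_inputs s' s''"
    using lin_deq_backward[OF inv lin] by blast
  moreover from this(2) have "path AbsQ0 s [a] s''" by (simp add: path_single_iff)
  moreover have "proj Gamma [a] = [a]" using lin_deq by simp
  ultimately show ?thesis by blast
next
  case (lin_deq_empty k)
  with lin_deq_empty_backward[OF inv lin] show ?thesis by fastforce
qed

lemma absq_path_backward:
  "path AbsQ u p u' \<Longrightarrow> absq_inv u \<Longrightarrow> linearizes s' ls' u' \<Longrightarrow>
   \<exists>s ls w t. linearizes s ls u \<and> path AbsQ0 s w t \<and> proj Gamma w = p"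
proof (induction arbitrary: s' ls' rule: path.induct)
  case (path_nil u)
  then show ?case by (metis path.path_nil proj_simps(1))
next
  case (path_cons u a m p u')
  then have step: "absq_step u a m" by simp
  with path_cons obtain sm lsm w t where
    "linearizes sm lsm m" "path AbsQ0 sm w t" "proj Gamma w = p"
    by (meson absq_inv_step)
  moreover obtain s ls v s'' where "linearizes s ls u" "path AbsQ0 s v s''"
    "proj Gamma v = [a]" "agree_on_live_inputs sm s''"
    using absq_step_backward[OF step path_cons.prems(1) \<open>linearizes sm lsm m\<close>] by blast
  moreover obtain t' where "path AbsQ0 s'' w t'"
    using absq0_path_agree_on_live_inputs \<open>path AbsQ0 sm w t\<close> \<open>agree_on_live_inputs sm s''\<close>
    by blast
  ultimately have "linearizes s ls u" "path AbsQ0 s (v @ w) t'" "proj Gamma (v @ w) = a # p"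
    by (auto simp: path_append_iff)
  then show ?case by blast
qed

lemma wf_converse_sorted_list:
  assumes "wf (r\<inverse>)" and "finite X"
  shows "\<exists>ls. distinct ls \<and> set ls = X \<and> sorted_wrt (\<lambda>a b. (a, b) \<notin> r) ls"
  using assms(2)
proof (induction rule: finite_remove_induct)
  case empty
  then show ?case by simp
next
  case (remove X)
  then obtain m where "m \<in> X" and max: "\<And>y. (m, y) \<in> r \<Longrightarrow> y \<notin> X"
    using wfE_min'[OF assms(1)] by (metis converse_iff)
  with remove.IH obtain ls where "distinct ls" "set ls = X - {m}"
    "sorted_wrt (\<lambda>a b. (a, b) \<notin> r) ls"
    by blast
  with \<open>m \<in> X\<close> max show ?case
    by (intro exI[of _ "m # ls"]) auto
qed

lemma linearizes_exists:
  assumes inv: "absq_inv u"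
  shows "\<exists>s ls. linearizes s ls u"
proof -
  have "finite (qO u)" and lt_O: "qlt u \<subseteq> qO u \<times> qO u"
    and "Relation.trans (qlt u)" "irrefl (qlt u)"
    using inv unfolding absq_inv_def COMPs_def by blast+
  then have "finite (qlt u)" "acyclic (qlt u)"
    using finite_subset[OF lt_O] by (simp_all add: acyclic_irrefl)
  then have "wf ((qlt u)\<inverse>)" by (rule finite_acyclic_wf_converse)
  moreover have "finite {k \<in> qO u. qcp u k = Some A2}" using \<open>finite (qO u)\<close> by simp
  ultimately obtain ls where ls: "distinct ls" "set ls = {k \<in> qO u. qcp u k = Some A2}"
    "sorted_wrt (\<lambda>a b. (a, b) \<notin> qlt u) ls"
    using wf_converse_sorted_list by blast
  text \<open>Linearize exactly the completed enqueues; AbsQ states have no control point A.\<close>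
  define s where "s = \<lparr>q0seq = map (lab_of u) ls,
    q0in = (\<lambda>k. if k \<in> qO u then Some (lab_of u k) else None), q0rv = qrv u,
    q0cp = (\<lambda>k. if qcp u k = Some A1 \<and> k \<notin> qO u then Some A else qcp u k)\<rparr>"
  have noA: "qcp u k \<noteq> Some A" for k using inv by (simp add: absq_inv_def)
  have "linearizes s ls u"
    unfolding linearizes_def
  proof (intro conjI allI impI ballI)
    fix k
    show "abs_cp (q0cp s k) = qcp u k"
      using noA[of k] by (cases "qcp u k") (auto simp: s_def)
    show "q0cp s k = Some A1 \<Longrightarrow> k \<in> qO u"
      by (auto simp: s_def split: if_splits)
    show "q0cp s k \<notin> {Some A1, Some A, Some A2} \<Longrightarrow> q0in s k = None"
      using absq_inv_O_cp[OF inv, of k] by (auto simp: s_def)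
  next
    show "set ls = {k \<in> qO u. q0cp s k \<in> {Some A, Some A2}}"
      using ls(2) absq_inv_O_cp[OF inv] noA by (auto simp: s_def)
  qed (use ls in \<open>simp_all add: s_def\<close>)
  then show ?thesis by blast
qed

lemma linearizes_absq_init:
  assumes "linearizes s ls absq_init"
  shows "s = absq0_init"
proof -
  note L = linearizesD[OF assms]
  have cp: "q0cp s k = None" for k
    using L(1)[of k] by (cases "q0cp s k") (auto simp: absq_init_def)
  then have "q0in s k = None" for k using L(3)[of k] by simp
  moreover have "q0seq s = []" using L(7,8) by (simp add: absq_init_def)
  ultimately show ?thesis
    using cp L(5) by (cases s) (simp add: absq0_init_def absq_init_def fun_eq_iff)
qed

lemma traces_AbsQ_subset: "traces AbsQ \<subseteq> proj Gamma ` traces AbsQ0"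
proof
  fix p assume "p \<in> traces (AbsQ :: (absq, 'x act) lts)"
  then obtain u where run: "path AbsQ absq_init p u" by (auto simp: traces_def)
  then obtain s' ls' where "linearizes s' ls' u"
    using linearizes_exists absq_inv_path absq_inv_init by blast
  then obtain s ls w t where "linearizes s ls absq_init" "path AbsQ0 s w t" "proj Gamma w = p"
    using absq_path_backward[OF run absq_inv_init] by blast
  then show "p \<in> proj Gamma ` traces AbsQ0"
    using linearizes_absq_init by (auto simp: traces_def)
qed

lemma proj_traces_AbsQ0_eq: "proj Gamma ` traces AbsQ0 = traces AbsQ"
  using proj_traces_AbsQ0_subset traces_AbsQ_subset by blast

section \<open>Queue implementations\<close>

lemma queue_impl_loop_invisible:
  assumes L: "queue_impl L" and loop: "path L (init L) w (init L)"
    and abs: "proj Gamma w \<in> traces AbsQ"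
  shows "proj Gamma w = []"
proof (rule ccontr)
  assume "proj Gamma w \<noteq> []"
  then obtain b p where "proj Gamma w = b # p" by (cases "proj Gamma w") auto
  with abs obtain u where "absq_step absq_init b u"
    by (auto simp: traces_def path_Cons_iff)
  then have call: "b \<in> Calls" by (rule absq_step_from_init_is_call)
  have "b \<in> set w" using set_proj[of Gamma w] \<open>proj Gamma w = b # p\<close> by auto
  then obtain i where i: "i < length w" "w ! i = b" by (auto simp: in_set_conv_nth)
  text \<open>Running the loop twice calls the same operation twice.\<close>
  from loop have "path L (init L) (w @ w) (init L)" by (auto simp: path_append_iff)
  then have "w @ w \<in> traces L" by (auto simp: traces_def)
  with L have "\<forall>i j. i < j \<and> j < length (w @ w) \<and> (w @ w) ! i \<in> Calls \<and> (w @ w) ! j \<in> Calls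
      \<longrightarrow> opid ((w @ w) ! i) \<noteq> opid ((w @ w) ! j)"
    by (simp add: queue_impl_def well_formed_def)
  moreover have "(w @ w) ! i = b" "(w @ w) ! (length w + i) = b"
    "i < length w + i" "length w + i < length (w @ w)"
    using i by (simp_all add: nth_append) (cases w, simp_all)
  ultimately have "opid b \<noteq> opid b" using call by metis
  then show False by simp
qed

lemma queue_impl_AbsQ_deterministic:
  assumes "queue_impl L" and "w \<in> traces L"
    and "path AbsQ absq_init (proj Gamma w) u1" and "path AbsQ absq_init (proj Gamma w) u2"
  shows "u1 = u2"
proof -
  have "enq_values_unique w"
    using assms(1,2) by (simp add: queue_impl_def no_dup_enq_imp_enq_values_unique)
  then have "enq_values_unique (proj Gamma w)"
    using set_proj[of Gamma w] unfolding enq_values_unique_def by blast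
  with assms(3,4) show ?thesis by (rule absq_path_deterministic)
qed

lemma queue_impl_fwd_sim_AbsQ:
  fixes L :: "('s, 'x act) lts"
  assumes L: "queue_impl L" and incl: "proj Gamma ` traces L \<subseteq> traces AbsQ"
  shows "\<exists>fs. fwd_sim Gamma L AbsQ fs"
proof -
  have "fwd_sim Gamma L AbsQ {(s, u). \<exists>w. path L (init L) w s \<and>
    path AbsQ (init (AbsQ :: (absq, 'x act) lts)) (proj Gamma w) u}"
  proof (rule reachable_pairs_fwd_sim[OF _ incl])
    show "alpha AbsQ \<subseteq> Gamma" by (simp add: alpha_AbsQ)
  next
    fix w assume "path L (init L) w (init L)"
    moreover from this have "proj Gamma w \<in> traces AbsQ"
      using incl unfolding traces_def by blast
    ultimately show "proj Gamma w = []" by (rule queue_impl_loop_invisible[OF L])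
  qed (use queue_impl_AbsQ_deterministic[OF L] in simp)
  then show ?thesis ..
qed

theorem corollary1:
  fixes L :: "('s, 'x act) lts"
  assumes "queue_impl L" and "fixed_deq_lin L"
  shows "(proj Gamma ` traces L \<subseteq> proj Gamma ` traces (AbsQ0 :: (absq0, 'x act) lts))
         \<longleftrightarrow> (\<exists>fs. fwd_sim Gamma L (AbsQ :: (absq, 'x act) lts) fs)"
  unfolding proj_traces_AbsQ0_eq
proof
  assume "proj Gamma ` traces L \<subseteq> traces (AbsQ :: (absq, 'x act) lts)"
  with assms(1) show "\<exists>fs. fwd_sim Gamma L (AbsQ :: (absq, 'x act) lts) fs"
    by (rule queue_impl_fwd_sim_AbsQ)
next
  assume "\<exists>fs. fwd_sim Gamma L (AbsQ :: (absq, 'x act) lts) fs"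
  then obtain fs where "fwd_sim Gamma L (AbsQ :: (absq, 'x act) lts) fs" ..
  moreover have "lts_wf L" using assms(1) by (simp add: queue_impl_def)
  ultimately show "proj Gamma ` traces L \<subseteq> traces (AbsQ :: (absq, 'x act) lts)"
    by (rule fwd_sim_proj_traces) (simp add: alpha_AbsQ)
qed

end
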